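(* Let $J$ be a Jacobi matrix and let $C_n,G_n$ be as defined in the context. (i) If $\sum_{n=1}^\infty[|b_n|+|a_n^2-1|]<\infty$, then for each $z\in\overline{\mathbb{D}}\setminus\{\pm1\}$, $A_0(z):=\sup_n[|G_n(z)|+|C_n(z)|]<\infty$, and $A_0(z)$ is bounded uniformly on compact subsets of $\overline{\mathbb{D}}\setminus\{\pm1\}$. (ii) If $\sum_{n=1}^\infty n[|b_n|+|a_n^2-1|]<\infty$, then there is a constant $A_1$ with $\sup_{n,\,z\in\overline{\mathbb{D}}}|G_n(z)|\le A_1$ and $\sup_{n,\,z\in\overline{\mathbb{D}}}\frac{|C_n(z)|}{1+n}\le A_1$. (iii) If $|b_n|+|a_n^2-1|\le CR^{-2n}$ for all $n$, for some $C$ and some $R>1$, then there is a constant $A_2$ such that for all $z$ with $|z|<R$ and all $n$, $|G_n(z)|+|C_n(z)|\le A_2(1+n)[\max(1,|z|)]^{2n}$.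
   Context: $J$ is a Jacobi matrix with diagonal entries $b_n\in\mathbb{R}$ and off-diagonal entries $a_n>0$ ($n\ge1$); set $a_0=1$. The orthonormal polynomials satisfy $p_{-1}=0$, $p_0=1$, $xp_n(x)=a_{n+1}p_{n+1}(x)+b_{n+1}p_n(x)+a_np_{n-1}(x)$. Define $c_n(z)=z^np_n(z+z^{-1})$, $g_n(z)=z^n\bigl(p_n(z+z^{-1})-a_nzp_{n-1}(z+z^{-1})\bigr)$, $C_n=a_1\cdots a_n\,c_n$, $G_n=a_1\cdots a_n\,g_n$ (polynomials in $z$). $\mathbb{D}=\{|z|<1\}$. *)

theory Defs
  imports "HOL-Analysis.Analysis" "HOL-Computational_Algebra.Polynomial"
begin

text \<open>Orthonormal polynomials p_n of the Jacobi matrix with diagonal entries b n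
  and off-diagonal entries a n (n >= 1), as real polynomials, from the recurrence
  x p_n = a_(n+1) p_(n+1) + b_(n+1) p_n + a_n p_(n-1), p_(-1) = 0, p_0 = 1.\<close>
fun jpoly :: "(nat \<Rightarrow> real) \<Rightarrow> (nat \<Rightarrow> real) \<Rightarrow> nat \<Rightarrow> real poly" where
  "jpoly a b 0 = 1"
| "jpoly a b (Suc 0) = smult (1 / a 1) [:- b 1, 1:]"
| "jpoly a b (Suc (Suc n)) =
     smult (1 / a (Suc (Suc n)))
       ([:- b (Suc (Suc n)), 1:] * jpoly a b (Suc n) - smult (a (Suc n)) (jpoly a b n))"

text \<open>For a polynomial q of degree at most n, zpoly n q is the polynomial in z
  equal to z^n q(z + 1/z) (for z \<noteq> 0): expand z^n (z+1/z)^k = z^(n-k) (z^2+1)^k.\<close>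
definition zpoly :: "nat \<Rightarrow> real poly \<Rightarrow> complex \<Rightarrow> complex" where
  "zpoly n q z = (\<Sum>k\<le>n. of_real (coeff q k) * z ^ (n - k) * (z\<^sup>2 + 1) ^ k)"

definition cfun :: "(nat \<Rightarrow> real) \<Rightarrow> (nat \<Rightarrow> real) \<Rightarrow> nat \<Rightarrow> complex \<Rightarrow> complex" where
  "cfun a b n z = zpoly n (jpoly a b n) z"

text \<open>g_n(z) = z^n (p_n(z+1/z) - a_n z p_(n-1)(z+1/z)) = c_n(z) - a_n z^2 c_(n-1)(z),
  with p_(-1) = 0 (so g_0 = c_0).\<close>
definition gfun :: "(nat \<Rightarrow> real) \<Rightarrow> (nat \<Rightarrow> real) \<Rightarrow> nat \<Rightarrow> complex \<Rightarrow> complex" where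
  "gfun a b n z = (if n = 0 then cfun a b 0 z
                   else cfun a b n z - of_real (a n) * z\<^sup>2 * cfun a b (n - 1) z)"

definition Cfun :: "(nat \<Rightarrow> real) \<Rightarrow> (nat \<Rightarrow> real) \<Rightarrow> nat \<Rightarrow> complex \<Rightarrow> complex" where
  "Cfun a b n z = of_real (\<Prod>i=1..n. a i) * cfun a b n z"

definition Gfun :: "(nat \<Rightarrow> real) \<Rightarrow> (nat \<Rightarrow> real) \<Rightarrow> nat \<Rightarrow> complex \<Rightarrow> complex" where
  "Gfun a b n z = of_real (\<Prod>i=1..n. a i) * gfun a b n z"

end

theory Submission
  imports Defs
begin

text \<open>
  Substituting x = z + 1/z turns the three-term recurrence into a first order system for the
  pair (G n, C n):
    G (n+1) = G n + (- b (n+1) z + (1 - a (n+1)^2) z^2) C n,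
    C (n+1) = (z^2 - b (n+1) z) C n + G n.
  For the free Jacobi matrix (a = 1, b = 0) this gives G n = 1 and C n = 1 + z^2 + ... + z^(2n);
  in general the perturbation at step n has size e n = |b (n+1)| + |a (n+1)^2 - 1|.
  A Gronwall-type induction bounds both |G n| and |C n| / (n+1) by
  exp (sum over k < n of (k+1) e k (|z| + |z|^2)) max(1,|z|)^(2n), which gives (ii) on the closed
  disc and, when e k = O(R^(-2k)), (iii) on |z| < R.
  For (i) the factor n+1 has to be avoided. One passes to H n = G n - (1 - z^2) C n, which is
  z^(2n+2) in the free case: |G n| + |H n| only grows by factors 1 + 6 e n / |1 - z^2|, and
  C n = (G n - H n) / (1 - z^2) is recovered away from z = 1 and z = -1.
\<close>

section \<open>A perturbed free recursion\<close>

lemma norm_perturbation_le: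
  fixes z :: complex and \<beta> \<alpha> :: real
  shows "cmod (- of_real \<beta> * z + of_real \<alpha> * z\<^sup>2) \<le> (\<bar>\<beta>\<bar> + \<bar>\<alpha>\<bar>) * (cmod z + (cmod z)\<^sup>2)"
proof -
  have "cmod (- of_real \<beta> * z + of_real \<alpha> * z\<^sup>2) \<le> \<bar>\<beta>\<bar> * cmod z + \<bar>\<alpha>\<bar> * (cmod z)\<^sup>2"
    by (rule order_trans[OF norm_triangle_ineq]) (simp add: norm_mult norm_power)
  also have "\<dots> \<le> (\<bar>\<beta>\<bar> + \<bar>\<alpha>\<bar>) * (cmod z + (cmod z)\<^sup>2)"
    by (simp add: algebra_simps)
  finally show ?thesis .
qed

text \<open>The induction step of the growth bound, with u, v the norms of G n, C n and
  s = max(1,|z|)^2.\<close>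

lemma growth_step_arith:
  fixes u v u' v' d s m Q :: real
  assumes u': "u' \<le> u + d * v" and v': "v' \<le> (s + d) * v + u"
    and d: "0 \<le> d" and s: "1 \<le> s" and m: "0 \<le> m"
    and u: "u \<le> Q" and v: "v \<le> (m + 1) * Q" and Q: "0 \<le> Q"
  shows "u' \<le> (1 + (m + 1) * d) * s * Q"
    and "v' \<le> (m + 2) * ((1 + (m + 1) * d) * s * Q)"
proof -
  have "u' \<le> (1 + (m + 1) * d) * Q"
    using u' u mult_left_mono[OF v d] by (simp add: algebra_simps)
  also have "\<dots> \<le> (1 + (m + 1) * d) * s * Q"
    using mult_left_mono[OF s, of "(1 + (m + 1) * d) * Q"] d m Q by (simp add: algebra_simps)
  finally show "u' \<le> (1 + (m + 1) * d) * s * Q" .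
  have "(s + d) * v \<le> (s + d) * ((m + 1) * Q)"
    using v d s by (intro mult_left_mono) auto
  then have "v' \<le> (s + d) * ((m + 1) * Q) + Q"
    using v' u by linarith
  also have "\<dots> \<le> (m + 2) * ((1 + (m + 1) * d) * s * Q)"
  proof -
    have "1 * 1 \<le> (m + 2) * s"
      using m s by (intro mult_mono) auto
    then have "0 \<le> (m + 1) * d * ((m + 2) * s - 1)"
      using d m by simp
    then have "0 \<le> Q * ((s - 1) + (m + 1) * d * ((m + 2) * s - 1))"
      using Q s by simp
    then show ?thesis by (simp add: algebra_simps)
  qed
  finally show "v' \<le> (m + 2) * ((1 + (m + 1) * d) * s * Q)" .
qed

lemma powr_minus_2n_eq_power:
  fixes R :: real
  assumes "0 < R"
  shows "R powr (- 2 * real n) = (1 / R\<^sup>2) ^ n"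
proof -
  have "R powr (- 2 * real n) = inverse (R powr real (2 * n))"
    by (simp add: powr_minus[symmetric])
  also have "\<dots> = inverse (R ^ (2 * n))"
    using assms by (subst powr_realpow) auto
  finally show ?thesis
    by (simp add: power_mult power_one_over inverse_eq_divide)
qed

lemma sum_linear_weight_le_geometric:
  fixes e :: "nat \<Rightarrow> real"
  assumes q: "0 < q" "q < 1" and C: "0 \<le> C" and e: "\<And>k. e k \<le> C * q ^ Suc k"
  shows "(\<Sum>k<n. (real k + 1) * e k) \<le> C * q / (1 - q)\<^sup>2"
proof -
  have sums: "(\<lambda>k. real (Suc k) * q ^ k) sums (1 / (1 - q)\<^sup>2)"
    using geometric_deriv_sums[of q] q by simp
  have "(\<Sum>k<n. real (Suc k) * q ^ k) \<le> (\<Sum>k. real (Suc k) * q ^ k)"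
    using q by (intro sum_le_suminf sums_summable[OF sums]) auto
  then have "(\<Sum>k<n. real (Suc k) * q ^ k) \<le> 1 / (1 - q)\<^sup>2"
    using sums_unique[OF sums] by simp
  then have "C * q * (\<Sum>k<n. real (Suc k) * q ^ k) \<le> C * q * (1 / (1 - q)\<^sup>2)"
    using C q by (intro mult_left_mono) auto
  moreover have "(\<Sum>k<n. (real k + 1) * e k) \<le> C * q * (\<Sum>k<n. real (Suc k) * q ^ k)"
  proof (unfold sum_distrib_left, intro sum_mono)
    fix k
    have "(real k + 1) * e k \<le> (real k + 1) * (C * q ^ Suc k)"
      using e by (intro mult_left_mono) auto
    then show "(real k + 1) * e k \<le> C * q * (real (Suc k) * q ^ k)"
      by (simp add: algebra_simps)
  qed
  ultimately show ?thesis
    by simp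
qed

locale GC_recursion =
  fixes \<beta> \<alpha> :: "nat \<Rightarrow> real" and z :: complex and G C :: "nat \<Rightarrow> complex"
  assumes G_0: "G 0 = 1" and C_0: "C 0 = 1"
    and G_Suc: "G (Suc n) = G n + (- of_real (\<beta> n) * z + of_real (\<alpha> n) * z\<^sup>2) * C n"
    and C_Suc: "C (Suc n) = (z\<^sup>2 - of_real (\<beta> n) * z) * C n + G n"
begin

lemma norm_G_Suc_le:
  "cmod (G (Suc n)) \<le> cmod (G n) + (\<bar>\<beta> n\<bar> + \<bar>\<alpha> n\<bar>) * (cmod z + (cmod z)\<^sup>2) * cmod (C n)"
  unfolding G_Suc
  by (rule order_trans[OF norm_triangle_ineq])
    (unfold norm_mult, intro add_left_mono mult_right_mono norm_perturbation_le norm_ge_zero)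

lemma norm_C_Suc_le:
  "cmod (C (Suc n))
    \<le> ((max 1 (cmod z))\<^sup>2 + (\<bar>\<beta> n\<bar> + \<bar>\<alpha> n\<bar>) * (cmod z + (cmod z)\<^sup>2)) * cmod (C n) + cmod (G n)"
proof -
  have "cmod (z\<^sup>2 - of_real (\<beta> n) * z) \<le> (cmod z)\<^sup>2 + \<bar>\<beta> n\<bar> * cmod z"
    by (rule order_trans[OF norm_triangle_ineq4]) (simp add: norm_mult norm_power)
  moreover have "(cmod z)\<^sup>2 \<le> (max 1 (cmod z))\<^sup>2"
    by (intro power_mono) auto
  moreover have "\<bar>\<beta> n\<bar> * cmod z \<le> (\<bar>\<beta> n\<bar> + \<bar>\<alpha> n\<bar>) * (cmod z + (cmod z)\<^sup>2)"
    by (simp add: algebra_simps)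
  ultimately have "cmod (z\<^sup>2 - of_real (\<beta> n) * z)
      \<le> (max 1 (cmod z))\<^sup>2 + (\<bar>\<beta> n\<bar> + \<bar>\<alpha> n\<bar>) * (cmod z + (cmod z)\<^sup>2)"
    by linarith
  then have "cmod (z\<^sup>2 - of_real (\<beta> n) * z) * cmod (C n)
      \<le> ((max 1 (cmod z))\<^sup>2 + (\<bar>\<beta> n\<bar> + \<bar>\<alpha> n\<bar>) * (cmod z + (cmod z)\<^sup>2)) * cmod (C n)"
    by (rule mult_right_mono) simp
  moreover have "cmod (C (Suc n)) \<le> cmod (z\<^sup>2 - of_real (\<beta> n) * z) * cmod (C n) + cmod (G n)"
    unfolding C_Suc by (rule order_trans[OF norm_triangle_ineq]) (simp add: norm_mult)
  ultimately show ?thesis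
    by linarith
qed

lemma norm_G_C_le_exp_sum:
  defines "D n \<equiv> (\<Sum>k<n. (real k + 1) * (\<bar>\<beta> k\<bar> + \<bar>\<alpha> k\<bar>)) * (cmod z + (cmod z)\<^sup>2)"
  shows "cmod (G n) \<le> exp (D n) * max 1 (cmod z) ^ (2 * n) \<and>
    cmod (C n) \<le> (real n + 1) * (exp (D n) * max 1 (cmod z) ^ (2 * n))"
proof (induction n)
  case 0
  then show ?case by (simp add: G_0 C_0 D_def)
next
  case (Suc n)
  define r where "r = max 1 (cmod z)"
  define d where "d = (\<bar>\<beta> n\<bar> + \<bar>\<alpha> n\<bar>) * (cmod z + (cmod z)\<^sup>2)"
  define Q where "Q = exp (D n) * r ^ (2 * n)"
  have d: "0 \<le> d" and r: "1 \<le> r\<^sup>2" and Q: "0 \<le> Q"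
    unfolding d_def r_def Q_def by (simp_all add: one_le_power)
  note norm_G_Suc_le[of n, folded d_def] norm_C_Suc_le[of n, folded d_def r_def]
  moreover have "cmod (G n) \<le> Q" "cmod (C n) \<le> (real n + 1) * Q"
    using Suc.IH unfolding Q_def r_def by auto
  ultimately have step:
    "cmod (G (Suc n)) \<le> (1 + (real n + 1) * d) * r\<^sup>2 * Q"
    "cmod (C (Suc n)) \<le> (real n + 2) * ((1 + (real n + 1) * d) * r\<^sup>2 * Q)"
    using growth_step_arith[OF _ _ d r of_nat_0_le_iff] Q by blast+
  define E where "E = exp (D (Suc n)) * r ^ (2 * Suc n)"
  have XE: "(1 + (real n + 1) * d) * r\<^sup>2 * Q \<le> E"
  proof -
    have "(1 + (real n + 1) * d) * (r\<^sup>2 * Q) \<le> exp ((real n + 1) * d) * (r\<^sup>2 * Q)"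
      using Q by (intro mult_right_mono exp_ge_add_one_self) simp
    also have "\<dots> = E"
      unfolding E_def D_def Q_def d_def by (simp add: exp_add algebra_simps power2_eq_square)
    finally show ?thesis by (simp add: algebra_simps)
  qed
  then have "(real n + 2) * ((1 + (real n + 1) * d) * r\<^sup>2 * Q) \<le> (real (Suc n) + 1) * E"
    by (simp add: mult_left_mono add.commute)
  with step XE show ?case
    unfolding r_def[symmetric] E_def[symmetric] by linarith
qed

lemma norm_G_C_le_exp:
  assumes "(\<Sum>k<n. (real k + 1) * (\<bar>\<beta> k\<bar> + \<bar>\<alpha> k\<bar>)) * (cmod z + (cmod z)\<^sup>2) \<le> B"
  shows "cmod (G n) \<le> exp B * max 1 (cmod z) ^ (2 * n)"
    and "cmod (C n) \<le> (real n + 1) * (exp B * max 1 (cmod z) ^ (2 * n))"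
proof -
  define X where "X = exp ((\<Sum>k<n. (real k + 1) * (\<bar>\<beta> k\<bar> + \<bar>\<alpha> k\<bar>)) * (cmod z + (cmod z)\<^sup>2))
      * max 1 (cmod z) ^ (2 * n)"
  have XB: "X \<le> exp B * max 1 (cmod z) ^ (2 * n)"
    unfolding X_def using assms by (intro mult_right_mono) auto
  then have "(real n + 1) * X \<le> (real n + 1) * (exp B * max 1 (cmod z) ^ (2 * n))"
    by (intro mult_left_mono) auto
  moreover have "cmod (G n) \<le> X" "cmod (C n) \<le> (real n + 1) * X"
    using norm_G_C_le_exp_sum[of n] unfolding X_def by auto
  ultimately show "cmod (G n) \<le> exp B * max 1 (cmod z) ^ (2 * n)"
    and "cmod (C n) \<le> (real n + 1) * (exp B * max 1 (cmod z) ^ (2 * n))"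
    using XB by linarith+
qed

definition H :: "nat \<Rightarrow> complex" where
  "H n = G n - (1 - z\<^sup>2) * C n"

lemma H_Suc:
  "H (Suc n) = z\<^sup>2 * H n
     + (- of_real (\<beta> n) * z + of_real (\<alpha> n) * z\<^sup>2 + (1 - z\<^sup>2) * (of_real (\<beta> n) * z)) * C n"
  unfolding H_def G_Suc C_Suc by (simp add: algebra_simps)

lemma norm_C_le_G_H:
  assumes "z\<^sup>2 \<noteq> 1"
  shows "cmod (C n) \<le> (cmod (G n) + cmod (H n)) / cmod (1 - z\<^sup>2)"
proof -
  have "C n = (G n - H n) / (1 - z\<^sup>2)"
    unfolding H_def using assms by (simp add: field_simps)
  then show ?thesis
    by (simp add: norm_divide divide_right_mono norm_triangle_ineq4)
qed

lemma norm_G_H_Suc_le: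
  assumes z: "cmod z \<le> 1" "z\<^sup>2 \<noteq> 1"
  shows "cmod (G (Suc n)) + cmod (H (Suc n))
    \<le> (cmod (G n) + cmod (H n)) * (1 + 6 * (\<bar>\<beta> n\<bar> + \<bar>\<alpha> n\<bar>) / cmod (1 - z\<^sup>2))"
proof -
  define \<epsilon> where "\<epsilon> = \<bar>\<beta> n\<bar> + \<bar>\<alpha> n\<bar>"
  define p where "p = - of_real (\<beta> n) * z + of_real (\<alpha> n) * z\<^sup>2 + (1 - z\<^sup>2) * (of_real (\<beta> n) * z)"
  have z2: "cmod (z\<^sup>2) \<le> 1"
    using z by (simp add: norm_power power_le_one)
  then have "cmod z + (cmod z)\<^sup>2 \<le> 2"
    using z by (simp add: norm_power)
  then have perturbation: "\<epsilon> * (cmod z + (cmod z)\<^sup>2) \<le> \<epsilon> * 2"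
    unfolding \<epsilon>_def by (intro mult_left_mono) auto
  have "cmod ((1 - z\<^sup>2) * (of_real (\<beta> n) * z)) \<le> 2 * \<epsilon>"
  proof -
    have "cmod (1 - z\<^sup>2) \<le> 2"
      using norm_triangle_ineq4[of 1 "z\<^sup>2"] z2 by simp
    moreover have "cmod (of_real (\<beta> n) * z) \<le> \<epsilon>"
      using z mult_left_mono[of "cmod z" 1 "\<bar>\<beta> n\<bar>"] unfolding \<epsilon>_def by (simp add: norm_mult)
    ultimately show ?thesis
      unfolding norm_mult by (intro mult_mono) auto
  qed
  then have "cmod p \<le> 4 * \<epsilon>"
    using perturbation norm_perturbation_le[of "\<beta> n" z "\<alpha> n"]
      norm_triangle_ineq[of "- of_real (\<beta> n) * z + of_real (\<alpha> n) * z\<^sup>2"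
        "(1 - z\<^sup>2) * (of_real (\<beta> n) * z)"]
    unfolding p_def \<epsilon>_def by linarith
  then have "cmod (H (Suc n)) \<le> cmod (H n) + 4 * \<epsilon> * cmod (C n)"
    using z2 mult_left_le_one_le[of "cmod (H n)" "cmod (z\<^sup>2)"]
      norm_triangle_ineq[of "z\<^sup>2 * H n" "p * C n"] mult_right_mono[of _ "4 * \<epsilon>" "cmod (C n)"]
    unfolding H_Suc p_def[symmetric] norm_mult by force
  moreover have "cmod (G (Suc n)) \<le> cmod (G n) + 2 * \<epsilon> * cmod (C n)"
    using norm_G_Suc_le[of n] mult_right_mono[OF perturbation norm_ge_zero[of "C n"]]
    unfolding \<epsilon>_def by (simp add: mult.commute)
  moreover have "6 * \<epsilon> * cmod (C n) \<le> 6 * \<epsilon> * ((cmod (G n) + cmod (H n)) / cmod (1 - z\<^sup>2))"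
    using norm_C_le_G_H[OF z(2)] unfolding \<epsilon>_def by (intro mult_left_mono) auto
  ultimately show ?thesis
    unfolding \<epsilon>_def[symmetric] by (simp add: algebra_simps)
qed

lemma norm_G_H_le:
  assumes z: "cmod z \<le> 1" "z\<^sup>2 \<noteq> 1"
  shows "cmod (G n) + cmod (H n) \<le> 2 * exp (6 * (\<Sum>k<n. \<bar>\<beta> k\<bar> + \<bar>\<alpha> k\<bar>) / cmod (1 - z\<^sup>2))"
proof (induction n)
  case 0
  then show ?case
    using z by (simp add: H_def G_0 C_0 norm_power power_le_one)
next
  case (Suc n)
  define x where "x = 6 * (\<bar>\<beta> n\<bar> + \<bar>\<alpha> n\<bar>) / cmod (1 - z\<^sup>2)"
  have "cmod (G (Suc n)) + cmod (H (Suc n)) \<le> (cmod (G n) + cmod (H n)) * (1 + x)"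
    unfolding x_def by (rule norm_G_H_Suc_le[OF z])
  also have "\<dots> \<le> 2 * exp (6 * (\<Sum>k<n. \<bar>\<beta> k\<bar> + \<bar>\<alpha> k\<bar>) / cmod (1 - z\<^sup>2)) * exp x"
    using Suc.IH unfolding x_def by (intro mult_mono exp_ge_add_one_self) auto
  also have "\<dots> = 2 * exp (6 * (\<Sum>k<Suc n. \<bar>\<beta> k\<bar> + \<bar>\<alpha> k\<bar>) / cmod (1 - z\<^sup>2))"
    unfolding x_def by (simp add: exp_add[symmetric] add_divide_distrib algebra_simps)
  finally show ?case .
qed

lemma norm_G_C_le_away_from_pm1:
  assumes z: "cmod z \<le> 1" and \<delta>: "0 < \<delta>" "\<delta> \<le> cmod (1 - z\<^sup>2)"
    and E: "(\<Sum>k<n. \<bar>\<beta> k\<bar> + \<bar>\<alpha> k\<bar>) \<le> E"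
  shows "cmod (G n) + cmod (C n) \<le> 2 * exp (6 * E / \<delta>) * (1 + 1 / \<delta>)"
proof -
  define S where "S = cmod (G n) + cmod (H n)"
  have z2: "z\<^sup>2 \<noteq> 1"
    using \<delta> by auto
  have "S \<le> 2 * exp (6 * E / \<delta>)"
  proof -
    have "6 * (\<Sum>k<n. \<bar>\<beta> k\<bar> + \<bar>\<alpha> k\<bar>) / cmod (1 - z\<^sup>2) \<le> 6 * E / \<delta>"
      using E \<delta> order_trans[OF sum_nonneg E] by (intro frac_le) auto
    then have "exp (6 * (\<Sum>k<n. \<bar>\<beta> k\<bar> + \<bar>\<alpha> k\<bar>) / cmod (1 - z\<^sup>2)) \<le> exp (6 * E / \<delta>)"
      by simp
    then show ?thesis
      using norm_G_H_le[OF z z2, of n] unfolding S_def by linarith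
  qed
  moreover have "cmod (C n) \<le> S / \<delta>"
    using order_trans[OF norm_C_le_G_H[OF z2, of n] divide_left_mono[OF \<delta>(2)]] \<delta> z2
    unfolding S_def by (simp add: zero_less_mult_iff)
  ultimately have "S + cmod (C n) \<le> 2 * exp (6 * E / \<delta>) * (1 + 1 / \<delta>)"
    using \<delta> divide_right_mono[of S "2 * exp (6 * E / \<delta>)" \<delta>] by (simp add: algebra_simps)
  then show ?thesis
    unfolding S_def using norm_ge_zero[of "H n"] by linarith
qed

end

section \<open>The Jacobi recurrence in the variable z\<close>

lemma zpoly_pCons_0: "zpoly (Suc n) (pCons 0 q) z = (z\<^sup>2 + 1) * zpoly n q z"
proof -
  have "zpoly (Suc n) (pCons 0 q) z = (\<Sum>k\<le>n. of_real (coeff q k) * z ^ (n - k) * (z\<^sup>2 + 1) ^ Suc k)"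
    unfolding zpoly_def by (subst sum.atMost_Suc_shift) simp
  also have "\<dots> = (z\<^sup>2 + 1) * zpoly n q z"
    unfolding zpoly_def sum_distrib_left by (rule sum.cong) (auto simp: algebra_simps)
  finally show ?thesis .
qed

lemma zpoly_Suc:
  assumes "degree q \<le> n"
  shows "zpoly (Suc n) q z = z * zpoly n q z"
proof -
  have "zpoly (Suc n) q z = (\<Sum>k\<le>n. of_real (coeff q k) * z ^ (Suc n - k) * (z\<^sup>2 + 1) ^ k)"
    unfolding zpoly_def using assms by (simp add: coeff_eq_0)
  also have "\<dots> = z * zpoly n q z"
    unfolding zpoly_def sum_distrib_left by (rule sum.cong) (auto simp: algebra_simps Suc_diff_le)
  finally show ?thesis .
qed

lemma zpoly_diff: "zpoly n (p - q) z = zpoly n p z - zpoly n q z"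
  unfolding zpoly_def by (simp add: sum_subtractf algebra_simps)

lemma zpoly_smult: "zpoly n (smult c p) z = of_real c * zpoly n p z"
  unfolding zpoly_def by (simp add: sum_distrib_left algebra_simps)

lemma degree_jpoly_le: "degree (jpoly a b n) \<le> n"
proof (induction a b n rule: jpoly.induct)
  case (3 a b n)
  have "degree ([:- b (Suc (Suc n)), 1:] * jpoly a b (Suc n)) \<le> Suc (Suc n)"
    using degree_mult_le[of "[:- b (Suc (Suc n)), 1:]" "jpoly a b (Suc n)"] 3 by simp
  moreover have "degree (smult (a (Suc n)) (jpoly a b n)) \<le> Suc (Suc n)"
    using degree_smult_le[of "a (Suc n)" "jpoly a b n"] 3 by simp
  ultimately show ?case
    by (simp add: order_trans[OF degree_smult_le] degree_diff_le)
qed (auto intro: order_trans[OF degree_smult_le])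

lemma cfun_0: "cfun a b 0 z = 1"
  unfolding cfun_def zpoly_def by simp

lemma cfun_Suc:
  assumes "a (Suc n) \<noteq> 0"
  shows "of_real (a (Suc n)) * cfun a b (Suc n) z =
    (z\<^sup>2 + 1 - of_real (b (Suc n)) * z) * cfun a b n z
    - (if n = 0 then 0 else of_real (a n) * z\<^sup>2 * cfun a b (n - 1) z)"
proof (cases n)
  case 0
  then show ?thesis using assms unfolding cfun_def zpoly_def by (simp add: algebra_simps)
next
  case (Suc m)
  have linear_factor: "[:- c, 1:] * q = pCons 0 q - smult c q" for c :: real and q
    by (simp add: mult_pCons_left)
  have deg: "degree (jpoly a b (Suc m)) \<le> Suc m" "degree (jpoly a b m) \<le> m"
    by (rule degree_jpoly_le)+
  have "zpoly (Suc (Suc m)) ([:- b (Suc (Suc m)), 1:] * jpoly a b (Suc m)) z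
     = (z\<^sup>2 + 1 - of_real (b (Suc (Suc m))) * z) * cfun a b (Suc m) z"
    unfolding linear_factor zpoly_diff zpoly_smult zpoly_pCons_0 cfun_def zpoly_Suc[OF deg(1)]
    by (simp add: algebra_simps)
  moreover have "zpoly (Suc (Suc m)) (jpoly a b m) z = z\<^sup>2 * cfun a b m z"
    using deg(2) unfolding cfun_def by (simp add: zpoly_Suc power2_eq_square)
  ultimately show ?thesis
    using assms unfolding cfun_def Suc jpoly.simps zpoly_smult zpoly_diff
    by (simp add: field_simps)
qed

lemma Cfun_Suc:
  assumes "a (Suc n) \<noteq> 0"
  shows "Cfun a b (Suc n) z = (z\<^sup>2 + 1 - of_real (b (Suc n)) * z) * Cfun a b n z
     - (if n = 0 then 0 else of_real ((a n)\<^sup>2) * z\<^sup>2 * Cfun a b (n - 1) z)"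
proof -
  have "Cfun a b (Suc n) z = of_real (\<Prod>i=1..n. a i) * (of_real (a (Suc n)) * cfun a b (Suc n) z)"
    unfolding Cfun_def prod.cl_ivl_Suc by simp
  also have "\<dots> = of_real (\<Prod>i=1..n. a i) * ((z\<^sup>2 + 1 - of_real (b (Suc n)) * z) * cfun a b n z
      - (if n = 0 then 0 else of_real (a n) * z\<^sup>2 * cfun a b (n - 1) z))"
    unfolding cfun_Suc[of a n b z, OF assms] ..
  also have "\<dots> = (z\<^sup>2 + 1 - of_real (b (Suc n)) * z) * Cfun a b n z
     - (if n = 0 then 0 else of_real ((a n)\<^sup>2) * z\<^sup>2 * Cfun a b (n - 1) z)"
    by (cases n) (simp_all add: Cfun_def prod.cl_ivl_Suc algebra_simps power2_eq_square)
  finally show ?thesis .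
qed

lemma Gfun_eq_Cfun:
  "Gfun a b n z = Cfun a b n z
     - (if n = 0 then 0 else of_real ((a n)\<^sup>2) * z\<^sup>2 * Cfun a b (n - 1) z)"
  by (cases n) (simp_all add: Cfun_def Gfun_def gfun_def prod.cl_ivl_Suc algebra_simps power2_eq_square)

section \<open>Bounds for Jacobi matrices\<close>

locale jacobi_matrix =
  fixes a b :: "nat \<Rightarrow> real"
  assumes a_pos: "\<And>n. n \<ge> 1 \<Longrightarrow> a n > 0"
begin

lemma Gfun_Cfun_GC_recursion:
  "GC_recursion (\<lambda>n. b (Suc n)) (\<lambda>n. 1 - (a (Suc n))\<^sup>2) z (\<lambda>n. Gfun a b n z) (\<lambda>n. Cfun a b n z)"
proof
  show "Gfun a b 0 z = 1" "Cfun a b 0 z = 1"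
    by (simp_all add: Gfun_def gfun_def Cfun_def cfun_0)
  show C_Suc: "Cfun a b (Suc n) z = (z\<^sup>2 - of_real (b (Suc n)) * z) * Cfun a b n z + Gfun a b n z" for n
    using a_pos[of "Suc n"] by (simp add: Cfun_Suc Gfun_eq_Cfun[of a b n] algebra_simps)
  show "Gfun a b (Suc n) z = Gfun a b n z
      + (- of_real (b (Suc n)) * z + of_real (1 - (a (Suc n))\<^sup>2) * z\<^sup>2) * Cfun a b n z" for n
    unfolding Gfun_eq_Cfun[of a b "Suc n"] by (simp add: C_Suc algebra_simps)
qed

lemma Gfun_Cfun_bounded_on_compact:
  assumes summable: "summable (\<lambda>n. \<bar>b (Suc n)\<bar> + \<bar>(a (Suc n))\<^sup>2 - 1\<bar>)"
    and K: "compact K" "K \<subseteq> cball 0 1 - {1, -1}"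
  shows "\<exists>M. \<forall>z\<in>K. \<forall>n. cmod (Gfun a b n z) + cmod (Cfun a b n z) \<le> M"
proof (cases "K = {}")
  case False
  have "continuous_on K (\<lambda>z. cmod (1 - z\<^sup>2))"
    by (intro continuous_intros)
  then obtain x where x: "x \<in> K" and x_min: "\<And>z. z \<in> K \<Longrightarrow> cmod (1 - x\<^sup>2) \<le> cmod (1 - z\<^sup>2)"
    using continuous_attains_inf[OF K(1) False] by blast
  have "x\<^sup>2 \<noteq> 1"
    using x K(2) power2_eq_1_iff[of x] by auto
  then have \<delta>: "0 < cmod (1 - x\<^sup>2)"
    by simp
  define E where "E = (\<Sum>n. \<bar>b (Suc n)\<bar> + \<bar>(a (Suc n))\<^sup>2 - 1\<bar>)"
  have E: "(\<Sum>k<n. \<bar>b (Suc k)\<bar> + \<bar>1 - (a (Suc k))\<^sup>2\<bar>) \<le> E" for n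
    unfolding E_def using sum_le_suminf[OF summable] by (simp add: abs_minus_commute)
  show ?thesis
  proof (intro exI ballI allI)
    fix z n
    assume "z \<in> K"
    with K(2) x_min have "cmod z \<le> 1" "cmod (1 - x\<^sup>2) \<le> cmod (1 - z\<^sup>2)"
      by auto
    then show "cmod (Gfun a b n z) + cmod (Cfun a b n z)
        \<le> 2 * exp (6 * E / cmod (1 - x\<^sup>2)) * (1 + 1 / cmod (1 - x\<^sup>2))"
      using GC_recursion.norm_G_C_le_away_from_pm1[OF Gfun_Cfun_GC_recursion _ \<delta> _ E] by blast
  qed
qed simp

lemma Gfun_Cfun_bounded_on_cball:
  assumes summable: "summable (\<lambda>n. real (Suc n) * (\<bar>b (Suc n)\<bar> + \<bar>(a (Suc n))\<^sup>2 - 1\<bar>))"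
  shows "\<exists>A. \<forall>n z. cmod z \<le> 1 \<longrightarrow>
    cmod (Gfun a b n z) \<le> A \<and> cmod (Cfun a b n z) / (1 + real n) \<le> A"
proof -
  define E where "E = (\<Sum>n. real (Suc n) * (\<bar>b (Suc n)\<bar> + \<bar>(a (Suc n))\<^sup>2 - 1\<bar>))"
  show ?thesis
  proof (intro exI allI impI conjI)
    fix n and z :: complex
    assume z: "cmod z \<le> 1"
    have "(\<Sum>k<n. (real k + 1) * (\<bar>b (Suc k)\<bar> + \<bar>1 - (a (Suc k))\<^sup>2\<bar>)) \<le> E"
      unfolding E_def using sum_le_suminf[OF summable] by (simp add: abs_minus_commute add.commute)
    moreover have "0 \<le> (\<Sum>k<n. (real k + 1) * (\<bar>b (Suc k)\<bar> + \<bar>1 - (a (Suc k))\<^sup>2\<bar>))"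
      by (intro sum_nonneg) simp
    moreover have "cmod z + (cmod z)\<^sup>2 \<le> 2"
      using z power_le_one[of "cmod z" 2] by simp
    ultimately have "(\<Sum>k<n. (real k + 1) * (\<bar>b (Suc k)\<bar> + \<bar>1 - (a (Suc k))\<^sup>2\<bar>)) * (cmod z + (cmod z)\<^sup>2)
        \<le> E * 2"
      by (intro mult_mono) auto
    note bound = GC_recursion.norm_G_C_le_exp[OF Gfun_Cfun_GC_recursion this]
    have "max 1 (cmod z) = 1"
      using z by simp
    with bound show "cmod (Gfun a b n z) \<le> exp (E * 2)"
      and "cmod (Cfun a b n z) / (1 + real n) \<le> exp (E * 2)"
      by (simp_all add: divide_le_eq mult.commute add.commute)
  qed
qed

lemma Gfun_Cfun_growth_bound:
  assumes R: "1 < R" and decay: "\<forall>n\<ge>1. \<bar>b n\<bar> + \<bar>(a n)\<^sup>2 - 1\<bar> \<le> C * R powr (- 2 * real n)"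
  shows "\<exists>A. \<forall>z n. cmod z < R \<longrightarrow>
    cmod (Gfun a b n z) + cmod (Cfun a b n z) \<le> A * (1 + real n) * (max 1 (cmod z)) ^ (2 * n)"
proof -
  define q where "q = 1 / R\<^sup>2"
  define B where "B = 2 * C / (1 - q)\<^sup>2"
  have q: "0 < q" "q < 1"
    unfolding q_def using R by (auto simp: field_simps)
  have \<epsilon>: "\<bar>b (Suc k)\<bar> + \<bar>1 - (a (Suc k))\<^sup>2\<bar> \<le> C * q ^ Suc k" for k
    using decay[rule_format, of "Suc k"] powr_minus_2n_eq_power[of R "Suc k"] R
    unfolding q_def by (simp add: abs_minus_commute)
  have "0 \<le> C * q ^ Suc 0"
    by (rule order_trans[OF _ \<epsilon>[of 0]]) simp
  then have "0 \<le> C"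
    using q by (simp add: zero_le_mult_iff)
  have exponent_le:
    "(\<Sum>k<n. (real k + 1) * (\<bar>b (Suc k)\<bar> + \<bar>1 - (a (Suc k))\<^sup>2\<bar>)) * (cmod z + (cmod z)\<^sup>2) \<le> B"
    if z: "cmod z < R" for z :: complex and n
  proof -
    have "R * 1 \<le> R * R"
      using R by (intro mult_left_mono) auto
    then have "cmod z \<le> R\<^sup>2"
      using z by (simp add: power2_eq_square)
    moreover have "(cmod z)\<^sup>2 \<le> R\<^sup>2"
      using z by (intro power_mono) auto
    ultimately have "cmod z + (cmod z)\<^sup>2 \<le> 2 / q"
      unfolding q_def by simp
    moreover have "(\<Sum>k<n. (real k + 1) * (\<bar>b (Suc k)\<bar> + \<bar>1 - (a (Suc k))\<^sup>2\<bar>)) \<le> C * q / (1 - q)\<^sup>2"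
      by (rule sum_linear_weight_le_geometric[OF q \<open>0 \<le> C\<close> \<epsilon>])
    ultimately have "(\<Sum>k<n. (real k + 1) * (\<bar>b (Suc k)\<bar> + \<bar>1 - (a (Suc k))\<^sup>2\<bar>)) * (cmod z + (cmod z)\<^sup>2)
        \<le> C * q / (1 - q)\<^sup>2 * (2 / q)"
      using \<open>0 \<le> C\<close> q by (intro mult_mono sum_nonneg) auto
    also have "\<dots> = B"
      unfolding B_def using q by (simp add: field_simps)
    finally show ?thesis .
  qed
  show ?thesis
  proof (intro exI allI impI)
    fix z :: complex and n
    assume "cmod z < R"
    note bound = GC_recursion.norm_G_C_le_exp[OF Gfun_Cfun_GC_recursion exponent_le[OF this, of n]]
    define X where "X = exp B * max 1 (cmod z) ^ (2 * n)"
    have "cmod (Gfun a b n z) + cmod (Cfun a b n z) \<le> X + (real n + 1) * X"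
      using bound unfolding X_def by linarith
    also have "\<dots> \<le> 2 * (1 + real n) * X"
      by (simp add: X_def algebra_simps)
    finally show "cmod (Gfun a b n z) + cmod (Cfun a b n z)
        \<le> 2 * exp B * (1 + real n) * max 1 (cmod z) ^ (2 * n)"
      by (simp add: X_def algebra_simps)
  qed
qed

end

theorem theoremA2:
  fixes a b :: "nat \<Rightarrow> real"
  assumes apos: "\<And>n. n \<ge> 1 \<Longrightarrow> a n > 0"
  shows
   "(summable (\<lambda>n. \<bar>b (Suc n)\<bar> + \<bar>(a (Suc n))\<^sup>2 - 1\<bar>) \<longrightarrow>
       (\<forall>z. cmod z \<le> 1 \<and> z \<noteq> 1 \<and> z \<noteq> -1 \<longrightarrow>
           bdd_above (range (\<lambda>n. cmod (Gfun a b n z) + cmod (Cfun a b n z)))) \<and>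
       (\<forall>K. compact K \<and> K \<subseteq> cball 0 1 - {1, -1} \<longrightarrow>
           (\<exists>M. \<forall>z\<in>K. \<forall>n. cmod (Gfun a b n z) + cmod (Cfun a b n z) \<le> M)))
    \<and>
    (summable (\<lambda>n. real (Suc n) * (\<bar>b (Suc n)\<bar> + \<bar>(a (Suc n))\<^sup>2 - 1\<bar>)) \<longrightarrow>
       (\<exists>A1. \<forall>n z. cmod z \<le> 1 \<longrightarrow>
           cmod (Gfun a b n z) \<le> A1 \<and> cmod (Cfun a b n z) / (1 + real n) \<le> A1))
    \<and>
    (\<forall>C R. R > 1 \<and> (\<forall>n\<ge>1. \<bar>b n\<bar> + \<bar>(a n)\<^sup>2 - 1\<bar> \<le> C * R powr (- 2 * real n)) \<longrightarrow>
       (\<exists>A2. \<forall>z n. cmod z < R \<longrightarrow>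
           cmod (Gfun a b n z) + cmod (Cfun a b n z)
             \<le> A2 * (1 + real n) * (max 1 (cmod z)) ^ (2 * n)))"
proof -
  interpret jacobi_matrix a b
    by unfold_locales (rule apos)
  have "bdd_above (range (\<lambda>n. cmod (Gfun a b n z) + cmod (Cfun a b n z)))"
    if summable: "summable (\<lambda>n. \<bar>b (Suc n)\<bar> + \<bar>(a (Suc n))\<^sup>2 - 1\<bar>)"
      and z: "cmod z \<le> 1 \<and> z \<noteq> 1 \<and> z \<noteq> -1" for z :: complex
  proof -
    obtain M where "\<forall>n. cmod (Gfun a b n z) + cmod (Cfun a b n z) \<le> M"
      using Gfun_Cfun_bounded_on_compact[OF summable, of "{z}"] z by auto
    then show ?thesis
      by (intro bdd_aboveI2) auto
  qed
  moreover note Gfun_Cfun_bounded_on_compact Gfun_Cfun_bounded_on_cball Gfun_Cfun_growth_bound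
  ultimately show ?thesis
    by (intro conjI impI allI; (elim conjE)?; simp)
qed

end
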